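(* Let $N\geq 3$ and let $(M,g)$ be an $N$-dimensional Riemannian model with pole $o$ and metric $ds^2=dr^2+\psi^2(r)\,d\omega^2$, where $\psi$ is a $C^\infty$ nonnegative function on $[0,+\infty)$, positive on $(0,+\infty)$, with $\psi'(0)=1$, $\psi^{(2k)}(0)=0$ for all $k\geq0$, and such that for all $r>0$: $K_{\pi,r}^{rad}\leq -1$ and $K_{\pi,r}^{rad}\geq H_{\pi,r}^{tan}$. Then for all $u\in C_c^\infty(M)$, $$\int_M(\Delta_{r,g}u)^2dv_g-\Big(\frac{N-1}{2}\Big)^2\int_M\Big(\frac{\partial u}{\partial r}\Big)^2dv_g\geq\frac14\int_M\frac1{r^2}\Big(\frac{\partial u}{\partial r}\Big)^2dv_g+\frac{N^2-1}{4}\int_M\frac1{\psi^2}\Big(\frac{\partial u}{\partial r}\Big)^2dv_g.$$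
   Context: $d\omega^2$ is the standard metric on $\mathbb{S}^{N-1}$, $r$ the geodesic distance from $o$, $\frac{\partial u}{\partial r}$ the radial derivative, $dv_g$ the Riemannian volume, $\Delta_{r,g}u=\frac{\partial^2u}{\partial r^2}+(N-1)\frac{\psi'}{\psi}\frac{\partial u}{\partial r}$, $K_{\pi,r}^{rad}=-\frac{\psi''}{\psi}$, $H_{\pi,r}^{tan}=-\frac{(\psi')^2-1}{\psi^2}$. *)

theory Defs
  imports "HOL-Analysis.Analysis"
begin

text \<open>C-infinity functions on a Euclidean space: there is a family D of all iterated
  partial derivatives (D ds is the partial derivative along the list ds of basis vectors),
  each of them continuous and differentiable with partial derivatives D (b # ds).\<close>
definition smooth_fun :: "('a::euclidean_space \<Rightarrow> real) \<Rightarrow> bool" where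
  "smooth_fun f \<longleftrightarrow> (\<exists>D :: 'a list \<Rightarrow> 'a \<Rightarrow> real. D [] = f \<and>
     (\<forall>ds x. (D ds has_derivative (\<lambda>h. \<Sum>b\<in>Basis. (h \<bullet> b) * D (b # ds) x)) (at x)) \<and>
     (\<forall>ds. continuous_on UNIV (D ds)))"

definition smooth_halfline_derivs :: "(nat \<Rightarrow> real \<Rightarrow> real) \<Rightarrow> bool" where
  "smooth_halfline_derivs Psi \<longleftrightarrow>
     (\<forall>k x. x \<ge> 0 \<longrightarrow> (Psi k has_real_derivative Psi (Suc k) x) (at x within {0..}))"

definition compact_support :: "('a::euclidean_space \<Rightarrow> real) \<Rightarrow> bool" where
  "compact_support u \<longleftrightarrow> compact (closure {x. u x \<noteq> 0})"

text \<open>The model manifold M is identified with R^N via polar coordinates about the pole o = 0: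
  a point x corresponds to r = norm x, omega = sgn x.\<close>

definition radial_d :: "('a::euclidean_space \<Rightarrow> real) \<Rightarrow> 'a \<Rightarrow> real" where
  "radial_d u x = deriv (\<lambda>t. u (t *\<^sub>R sgn x)) (norm x)"

definition radial_dd :: "('a::euclidean_space \<Rightarrow> real) \<Rightarrow> 'a \<Rightarrow> real" where
  "radial_dd u x = deriv (deriv (\<lambda>t. u (t *\<^sub>R sgn x))) (norm x)"

text \<open>Riemannian volume of the model dr^2 + psi(r)^2 domega^2 in these coordinates:
  dv_g = psi(r)^(N-1) dr domega = (psi(norm x)/norm x)^(N-1) dx.\<close>
definition model_vol :: "(real \<Rightarrow> real) \<Rightarrow> ('a::euclidean_space) measure" where
  "model_vol psi = density lborel
     (\<lambda>x. ennreal ((psi (norm x) / norm x) ^ (DIM('a) - 1)))"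

definition radial_laplacian ::
  "(real \<Rightarrow> real) \<Rightarrow> (real \<Rightarrow> real) \<Rightarrow> ('a::euclidean_space \<Rightarrow> real) \<Rightarrow> 'a \<Rightarrow> real" where
  "radial_laplacian psi psi' u x =
     radial_dd u x + real (DIM('a) - 1) * (psi' (norm x) / psi (norm x)) * radial_d u x"

definition K_rad :: "(real \<Rightarrow> real) \<Rightarrow> (real \<Rightarrow> real) \<Rightarrow> real \<Rightarrow> real" where
  "K_rad psi psi'' r = - psi'' r / psi r"

definition H_tan :: "(real \<Rightarrow> real) \<Rightarrow> (real \<Rightarrow> real) \<Rightarrow> real \<Rightarrow> real" where
  "H_tan psi psi' r = - ((psi' r)\<^sup>2 - 1) / (psi r)\<^sup>2"

end

theory Submission
  imports Defs
begin

(*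
  In polar coordinates the volume of the model is dv_g = psi(r)^n dr d(omega) with n = N - 1,
  so it suffices to prove, for every direction omega, a one-dimensional inequality for the
  radial derivative w(r) of u along the ray through omega.  With
    P = psi^n (w' + n (psi'/psi) w)^2,
    Q = psi^n w^2 ((n/2)^2 + 1/(4 r^2) + ((n+1)^2 - 1)/(4 psi^2)),
    B = w^2 psi^n/(2 r) + (n/2) psi' psi^(n-1) w^2
  one checks the identity
    P - Q - B' = psi^n (w' + (n/2)(psi'/psi) w - w/(2 r))^2
                 + psi^n w^2 ((n/2)^2 (psi''/psi - 1) + ((n/2)^2 + n/2) ((psi'^2 - 1)/psi^2 - psi''/psi)).
  The hypotheses K_rad <= -1 and H_tan <= K_rad say exactly that both curvature brackets are
  nonnegative, and B vanishes at r = 0 (as psi(0) = 0 and n >= 2) and beyond the support of u.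
  Integrating over r > 0 gives the inequality on every ray, and hence on M.
*)

section \<open>Polar coordinates\<close>

definition ray_integral :: "('a::euclidean_space \<Rightarrow> ennreal) \<Rightarrow> 'a \<Rightarrow> ennreal" where
  "ray_integral f \<omega> = (\<integral>\<^sup>+r\<in>{0<..}. f (r *\<^sub>R \<omega>) * ennreal (r ^ (DIM('a) - 1)) \<partial>lborel)"

lemma nn_integral_inverse_Icc:
  assumes "0 < a" "a \<le> b"
  shows "(\<integral>\<^sup>+t\<in>{a..b}. ennreal (1 / t) \<partial>lborel) = ennreal (ln b - ln a)"
proof -
  have "((\<lambda>t. 1 / t) has_integral (ln b - ln a)) {a..b}"
  proof (rule fundamental_theorem_of_calculus)
    show "(ln has_vector_derivative 1 / t) (at t within {a..b})" if "t \<in> {a..b}" for t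
      using that assms
      by (auto intro!: derivative_eq_intros simp flip: has_real_derivative_iff_has_vector_derivative)
  qed fact
  then show ?thesis
    using assms by (intro nn_integral_has_integral_lebesgue') auto
qed

lemma nn_integral_lborel_scaleR:
  fixes f :: "'a::euclidean_space \<Rightarrow> ennreal"
  assumes [measurable]: "f \<in> borel_measurable borel" and "c \<noteq> 0"
  shows "(\<integral>\<^sup>+x. f x \<partial>lborel) = ennreal (\<bar>c\<bar> ^ DIM('a)) * (\<integral>\<^sup>+x. f (c *\<^sub>R x) \<partial>lborel)"
  using \<open>c \<noteq> 0\<close>
  by (subst lborel_affine[of c 0]) (simp_all add: nn_integral_density nn_integral_distr nn_integral_cmult)

lemma ray_integral_scaleR:
  fixes f :: "'a::euclidean_space \<Rightarrow> ennreal"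
  assumes [measurable]: "f \<in> borel_measurable borel" and "y \<noteq> 0"
  shows "(\<integral>\<^sup>+t\<in>{0<..}. f (t *\<^sub>R y) * ennreal (t ^ (DIM('a) - 1)) \<partial>lborel)
       = ennreal (1 / norm y ^ DIM('a)) * ray_integral f (sgn y)"
proof -
  define \<rho> where "\<rho> = norm y"
  have \<rho>: "0 < \<rho>" using \<open>y \<noteq> 0\<close> by (simp add: \<rho>_def)
  have ray_eq: "f ((\<rho> * t) *\<^sub>R sgn y) * ennreal ((\<rho> * t) ^ (DIM('a) - 1)) * indicator {0<..} (\<rho> * t)
      = ennreal (\<rho> ^ (DIM('a) - 1)) * (f (t *\<^sub>R y) * ennreal (t ^ (DIM('a) - 1)) * indicator {0<..} t)" for t
    using \<rho> by (cases "0 < t")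
      (auto simp: \<rho>_def sgn_div_norm power_mult_distrib ennreal_mult zero_less_mult_iff mult_ac)
  have "ray_integral f (sgn y)
      = ennreal \<rho> * (\<integral>\<^sup>+t. f ((\<rho> * t) *\<^sub>R sgn y) * ennreal ((\<rho> * t) ^ (DIM('a) - 1))
          * indicator {0<..} (\<rho> * t) \<partial>lborel)"
    unfolding ray_integral_def using \<rho> by (subst nn_integral_real_affine[of _ \<rho> 0]) auto
  also have "\<dots> = ennreal \<rho> * (ennreal (\<rho> ^ (DIM('a) - 1))
      * (\<integral>\<^sup>+t\<in>{0<..}. f (t *\<^sub>R y) * ennreal (t ^ (DIM('a) - 1)) \<partial>lborel))"
    unfolding ray_eq by (subst nn_integral_cmult) auto
  also have "\<dots> = ennreal (\<rho> ^ DIM('a)) * (\<integral>\<^sup>+t\<in>{0<..}. f (t *\<^sub>R y) * ennreal (t ^ (DIM('a) - 1)) \<partial>lborel)"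
    using \<rho> DIM_positive[where 'a='a]
    by (simp add: mult.assoc[symmetric] ennreal_mult[symmetric] power_eq_if[of \<rho> "DIM('a)"])
  finally have "ray_integral f (sgn y) = ennreal (\<rho> ^ DIM('a))
      * (\<integral>\<^sup>+t\<in>{0<..}. f (t *\<^sub>R y) * ennreal (t ^ (DIM('a) - 1)) \<partial>lborel)" .
  then have "ennreal (1 / \<rho> ^ DIM('a)) * ray_integral f (sgn y)
      = (ennreal (1 / \<rho> ^ DIM('a)) * ennreal (\<rho> ^ DIM('a)))
        * (\<integral>\<^sup>+t\<in>{0<..}. f (t *\<^sub>R y) * ennreal (t ^ (DIM('a) - 1)) \<partial>lborel)"
    by (simp only: mult.assoc)
  also have "ennreal (1 / \<rho> ^ DIM('a)) * ennreal (\<rho> ^ DIM('a)) = 1"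
    using \<rho> by (simp flip: ennreal_mult)
  finally show ?thesis
    unfolding \<rho>_def by simp
qed

lemma nn_integral_annulus_scaleR:
  fixes f :: "'a::euclidean_space \<Rightarrow> ennreal"
  assumes [measurable]: "f \<in> borel_measurable borel" and "0 < t"
  shows "(\<integral>\<^sup>+y\<in>{y. 1 \<le> norm y \<and> norm y \<le> 2}. f (t *\<^sub>R y) * ennreal (t ^ (DIM('a) - 1)) \<partial>lborel)
       = (\<integral>\<^sup>+x\<in>{x. t \<le> norm x \<and> norm x \<le> 2 * t}. f x * ennreal (1 / t) \<partial>lborel)"
proof -
  have scale: "ennreal (t ^ DIM('a))
      * (f (t *\<^sub>R y) * ennreal (1 / t) * indicator {x. t \<le> norm x \<and> norm x \<le> 2 * t} (t *\<^sub>R y))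
      = f (t *\<^sub>R y) * ennreal (t ^ (DIM('a) - 1)) * indicator {y. 1 \<le> norm y \<and> norm y \<le> 2} y" for y :: 'a
  proof -
    have power: "ennreal (t ^ DIM('a)) * ennreal (1 / t) = ennreal (t ^ (DIM('a) - 1))"
      using \<open>0 < t\<close> DIM_positive[where 'a='a]
      by (simp add: power_eq_if[of t "DIM('a)"] flip: ennreal_mult)
    have shell: "indicator {x. t \<le> norm x \<and> norm x \<le> 2 * t} (t *\<^sub>R y)
        = (indicator {y. 1 \<le> norm y \<and> norm y \<le> 2} y :: ennreal)"
      using \<open>0 < t\<close> by (simp add: indicator_def)
    show ?thesis
      unfolding shell power[symmetric] by (simp only: ac_simps)
  qed
  have "(\<integral>\<^sup>+x\<in>{x. t \<le> norm x \<and> norm x \<le> 2 * t}. f x * ennreal (1 / t) \<partial>lborel)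
      = ennreal (t ^ DIM('a))
        * (\<integral>\<^sup>+y. f (t *\<^sub>R y) * ennreal (1 / t) * indicator {x. t \<le> norm x \<and> norm x \<le> 2 * t} (t *\<^sub>R y) \<partial>lborel)"
    using \<open>0 < t\<close> by (subst nn_integral_lborel_scaleR[of _ t]) auto
  also have "\<dots> = (\<integral>\<^sup>+y\<in>{y. 1 \<le> norm y \<and> norm y \<le> 2}. f (t *\<^sub>R y) * ennreal (t ^ (DIM('a) - 1)) \<partial>lborel)"
    by (subst nn_integral_cmult[symmetric]) (auto simp: scale)
  finally show ?thesis ..
qed

(* Integrating over the annulus 1 <= |y| <= 2 instead of the unit sphere avoids surface measure;
   the factor ln 2 is the integral of dt/t over [|x|/2, |x|]. *)
lemma nn_integral_lborel_polar:
  fixes f :: "'a::euclidean_space \<Rightarrow> ennreal"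
  assumes [measurable]: "f \<in> borel_measurable borel"
  shows "(\<integral>\<^sup>+x. f x \<partial>lborel) * ennreal (ln 2) =
    (\<integral>\<^sup>+y\<in>{y. 1 \<le> norm y \<and> norm y \<le> 2}. ennreal (1 / norm y ^ DIM('a)) * ray_integral f (sgn y) \<partial>lborel)"
    (is "_ = (\<integral>\<^sup>+y\<in>?A. _ \<partial>lborel)")
proof -
  let ?ray = "\<lambda>y t. f (t *\<^sub>R y) * ennreal (t ^ (DIM('a) - 1)) * indicator {0<..} t"
  let ?shell = "\<lambda>x t. f x * ennreal (1 / t) * indicator {x. t \<le> norm x \<and> norm x \<le> 2 * t} x * indicator {0<..} t"
  have ray: "ennreal (1 / norm y ^ DIM('a)) * ray_integral f (sgn y) = (\<integral>\<^sup>+t. ?ray y t \<partial>lborel)"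
    if "y \<in> ?A" for y
    using ray_integral_scaleR[of f y] that by (cases "y = 0") auto
  have "(\<integral>\<^sup>+y\<in>?A. ennreal (1 / norm y ^ DIM('a)) * ray_integral f (sgn y) \<partial>lborel)
      = (\<integral>\<^sup>+y. (\<integral>\<^sup>+t. ?ray y t * indicator ?A y \<partial>lborel) \<partial>lborel)"
    by (intro nn_integral_cong) (auto simp: ray nn_integral_multc split: split_indicator)
  also have "\<dots> = (\<integral>\<^sup>+t. (\<integral>\<^sup>+y. ?ray y t * indicator ?A y \<partial>lborel) \<partial>lborel)"
    by (rule lborel_pair.Fubini'[symmetric]) measurable
  also have "\<dots> = (\<integral>\<^sup>+t. (\<integral>\<^sup>+x. ?shell x t \<partial>lborel) \<partial>lborel)"
  proof (rule nn_integral_cong)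
    fix t :: real
    show "(\<integral>\<^sup>+y. ?ray y t * indicator ?A y \<partial>lborel) = (\<integral>\<^sup>+x. ?shell x t \<partial>lborel)"
      using nn_integral_annulus_scaleR[of f t] by (cases "0 < t") auto
  qed
  also have "\<dots> = (\<integral>\<^sup>+x. (\<integral>\<^sup>+t. ?shell x t \<partial>lborel) \<partial>lborel)"
    by (rule lborel_pair.Fubini') measurable
  also have "\<dots> = (\<integral>\<^sup>+x. f x * ennreal (ln 2) \<partial>lborel)"
  proof (rule nn_integral_cong_AE)
    show "AE x in lborel. (\<integral>\<^sup>+t. ?shell x t \<partial>lborel) = f x * ennreal (ln 2)"
      using AE_lborel_singleton[of 0]
    proof eventually_elim
      case (elim x)
      then have "0 < norm x" by simp
      then have "(\<integral>\<^sup>+t. ?shell x t \<partial>lborel) = f x * (\<integral>\<^sup>+t\<in>{norm x / 2..norm x}. ennreal (1 / t) \<partial>lborel)"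
        by (subst nn_integral_cmult[symmetric]) (auto intro!: nn_integral_cong split: split_indicator)
      also have "\<dots> = f x * ennreal (ln 2)"
        using \<open>0 < norm x\<close> by (simp add: nn_integral_inverse_Icc ln_div)
      finally show ?case .
    qed
  qed
  also have "\<dots> = (\<integral>\<^sup>+x. f x \<partial>lborel) * ennreal (ln 2)"
    by (rule nn_integral_multc) measurable
  finally show ?thesis ..
qed

lemma nn_integral_mono_rays:
  fixes f g :: "'a::euclidean_space \<Rightarrow> ennreal"
  assumes f [measurable]: "f \<in> borel_measurable borel" and g [measurable]: "g \<in> borel_measurable borel"
    and rays: "\<And>\<omega>. norm \<omega> = 1 \<Longrightarrow> ray_integral g \<omega> \<le> ray_integral f \<omega>"
  shows "(\<integral>\<^sup>+x. g x \<partial>lborel) \<le> (\<integral>\<^sup>+x. f x \<partial>lborel)"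
proof -
  have "(\<integral>\<^sup>+x. g x \<partial>lborel) * ennreal (ln 2) \<le> (\<integral>\<^sup>+x. f x \<partial>lborel) * ennreal (ln 2)"
    unfolding nn_integral_lborel_polar[OF f] nn_integral_lborel_polar[OF g]
  proof (intro nn_integral_mono)
    fix y :: 'a
    show "ennreal (1 / norm y ^ DIM('a)) * ray_integral g (sgn y) * indicator {y. 1 \<le> norm y \<and> norm y \<le> 2} y
        \<le> ennreal (1 / norm y ^ DIM('a)) * ray_integral f (sgn y) * indicator {y. 1 \<le> norm y \<and> norm y \<le> 2} y"
      by (cases "y = 0") (auto intro!: mult_left_mono rays simp: norm_sgn split: split_indicator)
  qed
  then show ?thesis
    by (simp add: ennreal_mult_le_mult_iff mult.commute[of _ "ennreal (ln 2)"])
qed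

lemma nn_integral_finite_rays:
  fixes f :: "'a::euclidean_space \<Rightarrow> ennreal"
  assumes f [measurable]: "f \<in> borel_measurable borel"
    and rays: "\<And>\<omega>. norm \<omega> = 1 \<Longrightarrow> ray_integral f \<omega> \<le> ennreal K"
  shows "(\<integral>\<^sup>+x. f x \<partial>lborel) < \<infinity>"
proof -
  let ?A = "{y::'a. 1 \<le> norm y \<and> norm y \<le> 2}"
  have "(\<integral>\<^sup>+x. f x \<partial>lborel) * ennreal (ln 2) \<le> (\<integral>\<^sup>+y. ennreal K * indicator ?A y \<partial>lborel)"
    unfolding nn_integral_lborel_polar[OF f]
  proof (intro nn_integral_mono)
    fix y :: 'a
    have "ennreal (1 / norm y ^ DIM('a)) * ray_integral f (sgn y) \<le> 1 * ennreal K" if "y \<in> ?A"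
      using that by (intro mult_mono rays) (auto simp: norm_sgn ennreal_le_1 divide_le_eq_1 one_le_power)
    then show "ennreal (1 / norm y ^ DIM('a)) * ray_integral f (sgn y) * indicator ?A y
        \<le> ennreal K * indicator ?A y"
      by (auto split: split_indicator)
  qed
  also have "\<dots> = ennreal K * emeasure lborel ?A"
    by (rule nn_integral_cmult_indicator) measurable
  also have "\<dots> < \<infinity>"
  proof -
    have "emeasure lborel ?A < \<infinity>"
      by (rule emeasure_bounded_finite) (auto simp: bounded_iff)
    then show ?thesis
      by (simp add: ennreal_mult_less_top)
  qed
  finally show ?thesis
    by (auto simp: ennreal_mult_less_top)
qed

section \<open>The inequality along a ray\<close>

definition rellich_weight :: "real \<Rightarrow> (real \<Rightarrow> real) \<Rightarrow> real \<Rightarrow> real" where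
  "rellich_weight N \<psi> r = ((N - 1) / 2)\<^sup>2 + 1 / (4 * r\<^sup>2) + (N\<^sup>2 - 1) / (4 * (\<psi> r)\<^sup>2)"

lemma rellich_weight_nonneg: "1 \<le> N \<Longrightarrow> 0 \<le> rellich_weight N \<psi> r"
  unfolding rellich_weight_def by (intro add_nonneg_nonneg divide_nonneg_nonneg) auto

locale model_warping =
  fixes p p' p'' :: "real \<Rightarrow> real"
  assumes p_deriv: "\<And>r. 0 \<le> r \<Longrightarrow> (p has_real_derivative p' r) (at r within {0..})"
    and p'_deriv: "\<And>r. 0 \<le> r \<Longrightarrow> (p' has_real_derivative p'' r) (at r within {0..})"
    and p_0: "p 0 = 0" and p'_0: "p' 0 = 1"
    and p_pos: "\<And>r. 0 < r \<Longrightarrow> 0 < p r"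
    and K_rad_le: "\<And>r. 0 < r \<Longrightarrow> K_rad p p'' r \<le> -1"
    and H_tan_le_K_rad: "\<And>r. 0 < r \<Longrightarrow> H_tan p p' r \<le> K_rad p p'' r"
begin

lemma p_le_p'': "0 < r \<Longrightarrow> p r \<le> p'' r"
  using K_rad_le[of r] p_pos[of r] by (simp add: K_rad_def field_simps)

lemma p''_div_le:
  assumes "0 < r"
  shows "p'' r / p r \<le> ((p' r)\<^sup>2 - 1) / (p r)\<^sup>2"
proof -
  have "- (((p' r)\<^sup>2 - 1) / (p r)\<^sup>2) \<le> - (p'' r / p r)"
    using H_tan_le_K_rad[OF assms] unfolding H_tan_def K_rad_def minus_divide_left .
  then show ?thesis
    by linarith
qed

lemma has_real_derivative_p: "0 < r \<Longrightarrow> (p has_real_derivative p' r) (at r)"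
  using p_deriv[of r] at_within_interior[of r "{0..}"] by simp

lemma has_real_derivative_p': "0 < r \<Longrightarrow> (p' has_real_derivative p'' r) (at r)"
  using p'_deriv[of r] at_within_interior[of r "{0..}"] by simp

lemma continuous_on_p: "continuous_on {0..} p"
  using p_deriv by (intro DERIV_continuous_on) auto

lemma continuous_on_p': "continuous_on {0..} p'"
  using p'_deriv by (intro DERIV_continuous_on) auto

lemma p'_bounded:
  obtains M where "\<And>r. 0 \<le> r \<Longrightarrow> r \<le> R \<Longrightarrow> p' r \<le> M"
proof -
  have "bounded (p' ` {0..R})"
    by (intro compact_imp_bounded compact_continuous_image continuous_on_subset[OF continuous_on_p'] compact_Icc)
      auto
  then show thesis
    using that by (force simp: bounded_iff abs_le_iff)
qed

lemma p'_ge_1: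
  assumes "0 \<le> r"
  shows "1 \<le> p' r"
proof -
  have "p' 0 \<le> p' r"
  proof (rule DERIV_nonneg_imp_increasing_open[OF assms])
    show "\<exists>y. (p' has_real_derivative y) (at x) \<and> 0 \<le> y" if "0 < x" "x < r" for x
      using that has_real_derivative_p' p_le_p''[of x] p_pos[of x] by force
    show "continuous_on {0..r} p'"
      using continuous_on_p' by (rule continuous_on_subset) auto
  qed
  then show ?thesis
    using p'_0 by simp
qed

lemma self_le_p:
  assumes "0 \<le> r"
  shows "r \<le> p r"
proof -
  have "p 0 - 0 \<le> p r - r"
  proof (rule DERIV_nonneg_imp_increasing_open[OF assms])
    show "\<exists>y. ((\<lambda>x. p x - x) has_real_derivative y) (at x) \<and> 0 \<le> y" if "0 < x" "x < r" for x
      using that p'_ge_1[of x]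
      by (intro exI[of _ "p' x - 1"]) (auto intro!: derivative_eq_intros has_real_derivative_p)
    show "continuous_on {0..r} (\<lambda>x. p x - x)"
      using continuous_on_p by (intro continuous_intros) (auto intro: continuous_on_subset)
  qed
  then show ?thesis
    using p_0 by simp
qed

lemma p_le_mult:
  assumes "0 \<le> r" and M: "\<And>s. 0 \<le> s \<Longrightarrow> s \<le> r \<Longrightarrow> p' s \<le> M"
  shows "p r \<le> M * r"
proof -
  have "M * 0 - p 0 \<le> M * r - p r"
  proof (rule DERIV_nonneg_imp_increasing_open[OF assms(1)])
    show "\<exists>y. ((\<lambda>x. M * x - p x) has_real_derivative y) (at x) \<and> 0 \<le> y" if "0 < x" "x < r" for x
      using that M[of x]
      by (intro exI[of _ "M - p' x"]) (auto intro!: derivative_eq_intros has_real_derivative_p)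
    show "continuous_on {0..r} (\<lambda>x. M * x - p x)"
      using continuous_on_p by (intro continuous_intros) (auto intro: continuous_on_subset)
  qed
  then show ?thesis
    using p_0 by simp
qed

definition laplacian_density :: "nat \<Rightarrow> (real \<Rightarrow> real) \<Rightarrow> (real \<Rightarrow> real) \<Rightarrow> real \<Rightarrow> real" where
  "laplacian_density n w w' r = p r ^ n * (w' r + real n * (p' r / p r) * w r)\<^sup>2"

definition rellich_density :: "nat \<Rightarrow> (real \<Rightarrow> real) \<Rightarrow> real \<Rightarrow> real" where
  "rellich_density n w r = p r ^ n * (w r)\<^sup>2 * rellich_weight (real n + 1) p r"

definition boundary_term :: "nat \<Rightarrow> (real \<Rightarrow> real) \<Rightarrow> real \<Rightarrow> real" where
  "boundary_term n w r = (w r)\<^sup>2 * p r ^ n / (2 * r) + real n / 2 * p' r * p r ^ (n - 1) * (w r)\<^sup>2"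

lemma laplacian_density_nonneg: "0 \<le> r \<Longrightarrow> 0 \<le> laplacian_density n w w' r"
  using self_le_p[of r] by (simp add: laplacian_density_def)

lemma rellich_density_nonneg: "0 \<le> r \<Longrightarrow> 0 \<le> rellich_density n w r"
  using self_le_p[of r] rellich_weight_nonneg[of "real n + 1" p r] by (simp add: rellich_density_def)

lemma boundary_term_deriv:
  assumes n: "2 \<le> n" and r: "0 < r" and w: "(w has_real_derivative w' r) (at r)"
  shows "(boundary_term n w has_real_derivative deriv (boundary_term n w) r) (at r)"
    and "rellich_density n w r \<le> laplacian_density n w w' r - deriv (boundary_term n w) r"
proof -
  obtain m where m: "n = m + 2"
    using n by (metis add.commute le_Suc_ex)
  have pr: "0 < p r"
    using p_pos r by simp
  define B' where "B' = 2 * w r * w' r * p r ^ n / (2 * r) + (w r)\<^sup>2 * real n * p r ^ (n - 1) * p' r / (2 * r)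
    - (w r)\<^sup>2 * p r ^ n / (2 * r\<^sup>2) + real n / 2 * (p'' r * p r ^ (n - 1) * (w r)\<^sup>2
      + real (n - 1) * (p' r)\<^sup>2 * p r ^ (n - 2) * (w r)\<^sup>2 + 2 * p' r * p r ^ (n - 1) * w r * w' r)"
  have B: "(boundary_term n w has_real_derivative B') (at r)"
    unfolding boundary_term_def[abs_def] B'_def
    apply (rule derivative_eq_intros refl has_real_derivative_p[OF r] has_real_derivative_p'[OF r] w
        | (use r in simp; fail))+
    using r pr unfolding m by (simp add: field_simps power2_eq_square)
  then show "(boundary_term n w has_real_derivative deriv (boundary_term n w) r) (at r)"
    by (simp add: DERIV_imp_deriv)
  have "laplacian_density n w w' r - rellich_density n w r - B'
      = p r ^ n * (w' r + real n / 2 * (p' r / p r) * w r - w r / (2 * r))\<^sup>2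
        + (w r)\<^sup>2 * p r ^ n * ((real n / 2)\<^sup>2 * (p'' r / p r - 1)
          + ((real n / 2)\<^sup>2 + real n / 2) * (((p' r)\<^sup>2 - 1) / (p r)\<^sup>2 - p'' r / p r))"
    unfolding laplacian_density_def rellich_density_def rellich_weight_def B'_def m
    using r pr by (simp add: field_simps power2_eq_square)
  moreover have "0 \<le> (real n / 2)\<^sup>2 * (p'' r / p r - 1)"
    using p_le_p''[OF r] pr by simp
  moreover have "0 \<le> ((real n / 2)\<^sup>2 + real n / 2) * (((p' r)\<^sup>2 - 1) / (p r)\<^sup>2 - p'' r / p r)"
    using p''_div_le[OF r] by simp
  ultimately have "0 \<le> laplacian_density n w w' r - rellich_density n w r - B'"
    using pr by (metis add_nonneg_nonneg mult_nonneg_nonneg zero_le_power2 zero_le_power less_imp_le)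
  then show "rellich_density n w r \<le> laplacian_density n w w' r - deriv (boundary_term n w) r"
    using DERIV_imp_deriv[OF B] by simp
qed

lemma boundary_term_at_0: "2 \<le> n \<Longrightarrow> boundary_term n w 0 = 0"
  by (simp add: boundary_term_def p_0)

lemma continuous_boundary_term_at_0:
  assumes n: "2 \<le> n" and w: "continuous (at 0 within {0..}) w"
  shows "continuous (at 0 within {0..}) (boundary_term n w)"
proof -
  have "p r ^ n = p r ^ (n - 1) * p r" for r
    using n by (metis Suc_diff_1 less_le_trans pos2 power_Suc2)
  then have B: "boundary_term n w
      = (\<lambda>r. (w r)\<^sup>2 * p r ^ (n - 1) * (p r / r) / 2 + real n / 2 * p' r * p r ^ (n - 1) * (w r)\<^sup>2)"
    by (simp add: boundary_term_def fun_eq_iff)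
  have "(p \<longlongrightarrow> 0) (at 0 within {0..})"
    using DERIV_continuous[OF p_deriv[of 0]] p_0 by (simp add: continuous_within)
  moreover have "(p' \<longlongrightarrow> p' 0) (at 0 within {0..})"
    using DERIV_continuous[OF p'_deriv[of 0]] by (simp add: continuous_within)
  moreover have "((\<lambda>r. p r / r) \<longlongrightarrow> p' 0) (at 0 within {0..})"
    using p_deriv[of 0] p_0 by (simp add: has_field_derivative_iff)
  moreover have "(w \<longlongrightarrow> w 0) (at 0 within {0..})"
    using w by (simp add: continuous_within)
  ultimately have "(boundary_term n w
      \<longlongrightarrow> (w 0)\<^sup>2 * 0 ^ (n - 1) * p' 0 / 2 + real n / 2 * p' 0 * 0 ^ (n - 1) * (w 0)\<^sup>2) (at 0 within {0..})"
    unfolding B by (intro tendsto_intros) auto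
  then show ?thesis
    using n by (simp add: continuous_within boundary_term_at_0 power_0_left)
qed

lemma laplacian_density_bound:
  assumes n: "2 \<le> n" and r: "0 < r" "r \<le> R" and w: "\<bar>w r\<bar> \<le> C" "\<bar>w' r\<bar> \<le> C"
    and M: "\<And>s. 0 \<le> s \<Longrightarrow> s \<le> R \<Longrightarrow> p' s \<le> M"
  shows "laplacian_density n w w' r \<le> M ^ n * R ^ (n - 2) * (C * R + real n * M * C)\<^sup>2"
proof -
  obtain m where m: "n = m + 2"
    using n by (metis add.commute le_Suc_ex)
  have pr: "0 < p r" and M1: "1 \<le> M" and C: "0 \<le> C"
    using p_pos[OF r(1)] M[of 0] p'_0 r w by auto
  have "p' r * r \<le> M * p r"
    using M[of r] self_le_p[of r] p'_ge_1[of r] r M1 by (intro mult_mono) auto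
  then have ratio: "0 \<le> p' r / p r" "p' r / p r \<le> M / r"
    using p'_ge_1[of r] r pr by (auto simp: field_simps)
  have "\<bar>w' r + real n * (p' r / p r) * w r\<bar> \<le> C + real n * (M / r) * C"
  proof -
    have "\<bar>real n * (p' r / p r) * w r\<bar> = real n * (p' r / p r) * \<bar>w r\<bar>"
      using ratio by (simp only: abs_mult abs_of_nonneg of_nat_0_le_iff)
    also have "\<dots> \<le> real n * (M / r) * C"
      using ratio w M1 r by (intro mult_mono mult_left_mono) auto
    finally have "\<bar>real n * (p' r / p r) * w r\<bar> \<le> real n * (M / r) * C" .
    then show ?thesis
      using w by linarith
  qed
  then have "(w' r + real n * (p' r / p r) * w r)\<^sup>2 \<le> (C + real n * (M / r) * C)\<^sup>2"
    by (metis abs_ge_zero abs_le_square_iff abs_of_nonneg order_trans)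
  moreover have "p r ^ n \<le> (M * r) ^ n"
    using p_le_mult[of r M] M r pr by (intro power_mono) auto
  ultimately have "laplacian_density n w w' r \<le> (M * r) ^ n * (C + real n * (M / r) * C)\<^sup>2"
    unfolding laplacian_density_def using pr M1 r by (intro mult_mono) auto
  also have "\<dots> = M ^ n * r ^ (n - 2) * (C * r + real n * M * C)\<^sup>2"
    using r unfolding m by (simp add: power_mult_distrib power2_eq_square field_simps)
  also have "\<dots> \<le> M ^ n * R ^ (n - 2) * (C * R + real n * M * C)\<^sup>2"
    using r C M1 by (intro mult_mono power_mono add_right_mono mult_left_mono) auto
  finally show ?thesis .
qed

lemma laplacian_density_integrable:
  assumes n: "2 \<le> n" and w: "continuous_on {0..R} w" and w': "continuous_on {0..R} w'"
  shows "laplacian_density n w w' integrable_on {0<..<R}"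
proof -
  obtain C where C: "\<And>r. r \<in> {0..R} \<Longrightarrow> \<bar>w r\<bar> \<le> C \<and> \<bar>w' r\<bar> \<le> C"
  proof -
    obtain C1 C2 where "\<forall>r\<in>{0..R}. \<bar>w r\<bar> \<le> C1" "\<forall>r\<in>{0..R}. \<bar>w' r\<bar> \<le> C2"
      using compact_imp_bounded[OF compact_continuous_image[OF w compact_Icc]]
        compact_imp_bounded[OF compact_continuous_image[OF w' compact_Icc]]
      by (fastforce simp: bounded_iff)
    then show thesis
      by (intro that[of "max C1 C2"]) force
  qed
  obtain M where M: "\<And>r. 0 \<le> r \<Longrightarrow> r \<le> R \<Longrightarrow> p' r \<le> M"
    by (fact p'_bounded)
  have "continuous_on {0<..<R} (laplacian_density n w w')"
    unfolding laplacian_density_def using p_pos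
    by (intro continuous_intros continuous_on_subset[OF continuous_on_p] continuous_on_subset[OF continuous_on_p']
        continuous_on_subset[OF w] continuous_on_subset[OF w']) force+
  then show ?thesis
  proof (rule measurable_bounded_by_integrable_imp_integrable[OF continuous_imp_measurable_on_sets_lebesgue])
    show "norm (laplacian_density n w w' r) \<le> M ^ n * R ^ (n - 2) * (C * R + real n * M * C)\<^sup>2"
      if "r \<in> {0<..<R}" for r
      using that laplacian_density_bound[OF n, of r R w C w' M] laplacian_density_nonneg[of r n w w'] C[of r] M
      by auto
  qed (auto intro: integrable_on_const)
qed

lemma deriv_boundary_term_has_integral:
  assumes n: "2 \<le> n" and R: "0 < R"
    and w: "\<And>r. (w has_real_derivative w' r) (at r)" and "w R = 0"
  shows "(deriv (boundary_term n w) has_integral 0) {0<..<R}"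
proof -
  let ?B = "boundary_term n w"
  have dB: "(?B has_real_derivative deriv ?B r) (at r)" if "0 < r" for r
    using boundary_term_deriv(1)[where w=w and w'=w', OF n that w] .
  have "(deriv ?B has_integral ?B R - ?B 0) {0..R}"
  proof (rule fundamental_theorem_of_calculus_interior)
    show "continuous_on {0..R} ?B"
      unfolding continuous_on_eq_continuous_within
    proof
      fix r assume r: "r \<in> {0..R}"
      show "continuous (at r within {0..R}) ?B"
      proof (cases "r = 0")
        case True
        have "continuous (at 0 within {0..}) ?B"
          by (rule continuous_boundary_term_at_0[OF n continuous_at_imp_continuous_within[OF DERIV_isCont[OF w]]])
        from continuous_within_subset[OF this, of "{0..R}"] True show ?thesis
          by auto
      next
        case False
        with r have "0 < r"
          by simp
        then show ?thesis
          by (rule continuous_at_imp_continuous_within[OF DERIV_isCont[OF dB]])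
      qed
    qed
  qed (use R dB in \<open>auto simp: has_real_derivative_iff_has_vector_derivative\<close>)
  moreover have "?B R = 0"
    using \<open>w R = 0\<close> by (simp add: boundary_term_def)
  ultimately show ?thesis
    by (simp add: boundary_term_at_0[OF n] has_integral_Icc_iff_Ioo)
qed

lemma rellich_ray_inequality:
  assumes n: "2 \<le> n" and R: "0 < R"
    and w: "\<And>r. (w has_real_derivative w' r) (at r)" and w': "continuous_on UNIV w'"
    and supp: "\<And>r. R \<le> r \<Longrightarrow> w r = 0 \<and> w' r = 0"
  shows "(\<integral>\<^sup>+r\<in>{0<..}. ennreal (rellich_density n w r) \<partial>lborel)
       \<le> (\<integral>\<^sup>+r\<in>{0<..}. ennreal (laplacian_density n w w' r) \<partial>lborel)"
proof -
  let ?B = "boundary_term n w" and ?S = "{0<..<R}"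
  have QPB: "rellich_density n w r \<le> laplacian_density n w w' r - deriv ?B r" if "0 < r" for r
    using boundary_term_deriv(2)[where w=w and w'=w', OF n that w] .
  have "continuous_on UNIV w"
    using w by (intro DERIV_continuous_on) auto
  then obtain I where P: "(laplacian_density n w w' has_integral I) ?S"
    using laplacian_density_integrable[OF n continuous_on_subset continuous_on_subset[OF w']] by blast
  have B: "(deriv ?B has_integral 0) ?S"
    using supp[of R] by (intro deriv_boundary_term_has_integral[OF n R w]) simp
  have vanish: "laplacian_density n w w' r = 0 \<and> rellich_density n w r = 0" if "R \<le> r" for r
    using supp[OF that] by (simp add: laplacian_density_def rellich_density_def)
  have "(\<integral>\<^sup>+r\<in>{0<..}. ennreal (rellich_density n w r) \<partial>lborel)
      \<le> (\<integral>\<^sup>+r\<in>?S. ennreal (laplacian_density n w w' r - deriv ?B r) \<partial>lborel)"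
  proof (rule nn_integral_mono)
    fix r :: real
    show "ennreal (rellich_density n w r) * indicator {0<..} r
        \<le> ennreal (laplacian_density n w w' r - deriv ?B r) * indicator ?S r"
      using QPB[of r] vanish[of r]
      by (cases "R \<le> r") (auto intro: ennreal_leI split: split_indicator)
  qed
  also have "\<dots> = ennreal I"
  proof (rule nn_integral_has_integral_lebesgue')
    show "0 \<le> laplacian_density n w w' r - deriv ?B r" if "r \<in> ?S" for r
      using that QPB[of r] rellich_density_nonneg[of r n w] by simp
  qed (use has_integral_diff[OF P B] in simp)
  also have "\<dots> = (\<integral>\<^sup>+r\<in>?S. ennreal (laplacian_density n w w' r) \<partial>lborel)"
    using P laplacian_density_nonneg by (intro nn_integral_has_integral_lebesgue'[symmetric]) auto
  also have "\<dots> = (\<integral>\<^sup>+r\<in>{0<..}. ennreal (laplacian_density n w w' r) \<partial>lborel)"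
    using vanish by (intro nn_integral_cong) (auto split: split_indicator)
  finally show ?thesis .
qed

lemma laplacian_ray_energy_bound:
  assumes n: "2 \<le> n" and R: "0 < R"
    and supp: "\<And>r. R \<le> r \<Longrightarrow> w r = 0 \<and> w' r = 0"
    and C: "\<And>r. 0 \<le> r \<Longrightarrow> r \<le> R \<Longrightarrow> \<bar>w r\<bar> \<le> C \<and> \<bar>w' r\<bar> \<le> C"
    and M: "\<And>r. 0 \<le> r \<Longrightarrow> r \<le> R \<Longrightarrow> p' r \<le> M"
  shows "(\<integral>\<^sup>+r\<in>{0<..}. ennreal (laplacian_density n w w' r) \<partial>lborel)
       \<le> ennreal (R * (M ^ n * R ^ (n - 2) * (C * R + real n * M * C)\<^sup>2))"
proof -
  let ?K = "M ^ n * R ^ (n - 2) * (C * R + real n * M * C)\<^sup>2"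
  have "(\<integral>\<^sup>+r\<in>{0<..}. ennreal (laplacian_density n w w' r) \<partial>lborel)
      \<le> (\<integral>\<^sup>+r. ennreal ?K * indicator {0<..R} r \<partial>lborel)"
  proof (rule nn_integral_mono)
    fix r :: real
    have "laplacian_density n w w' r = 0" if "R \<le> r"
      using supp[OF that] by (simp add: laplacian_density_def)
    then show "ennreal (laplacian_density n w w' r) * indicator {0<..} r \<le> ennreal ?K * indicator {0<..R} r"
      using laplacian_density_bound[OF n, of r R w C w' M] C[of r] M
      by (cases "R \<le> r") (auto intro: ennreal_leI split: split_indicator)
  qed
  also have "\<dots> = ennreal ?K * ennreal R"
    using R by (simp add: nn_integral_cmult_indicator)
  also have "\<dots> = ennreal (R * ?K)"
    using R by (simp add: ennreal_mult' mult.commute)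
  finally show ?thesis .
qed

end

section \<open>Radial derivatives of smooth functions\<close>

lemma has_real_derivative_along_ray:
  fixes F :: "'a::euclidean_space \<Rightarrow> real"
  assumes "(F has_derivative (\<lambda>h. \<Sum>b\<in>Basis. (h \<bullet> b) * g b)) (at (s *\<^sub>R \<omega>))"
  shows "((\<lambda>t. F (t *\<^sub>R \<omega>)) has_real_derivative (\<Sum>b\<in>Basis. (\<omega> \<bullet> b) * g b)) (at s)"
proof -
  have "((\<lambda>t. t *\<^sub>R \<omega>) has_derivative (\<lambda>h. h *\<^sub>R \<omega>)) (at s)"
    by (intro derivative_eq_intros) auto
  from has_derivative_compose[OF this assms]
  show ?thesis
    unfolding has_field_derivative_def
    by (rule has_derivative_eq_rhs) (simp add: fun_eq_iff sum_distrib_left mult_ac)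
qed

lemma has_derivative_partials_eq_0:
  fixes F :: "'a::euclidean_space \<Rightarrow> real"
  assumes U: "open U" "x \<in> U" and F: "\<And>z. z \<in> U \<Longrightarrow> F z = 0"
    and dF: "(F has_derivative (\<lambda>h. \<Sum>b\<in>Basis. (h \<bullet> b) * g b)) (at x)" and b: "b \<in> Basis"
  shows "g b = 0"
proof -
  have "((\<lambda>_. 0) has_derivative (\<lambda>_. 0)) (at x)"
    by simp
  then have "(F has_derivative (\<lambda>_. 0)) (at x)"
    by (rule has_derivative_transform_within_open[OF _ U]) (use F in auto)
  from has_derivative_unique[OF dF this]
  have "(\<Sum>b'\<in>Basis. (b \<bullet> b') * g b') = 0"
    by meson
  moreover have "(\<Sum>b'\<in>Basis. (b \<bullet> b') * g b') = (\<Sum>b'\<in>Basis. if b' = b then g b' else 0)"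
    by (rule sum.cong) (use b in \<open>auto simp: inner_Basis\<close>)
  ultimately show ?thesis
    using b by simp
qed

lemma abs_sum_Basis_inner_le:
  fixes \<omega> :: "'a::euclidean_space"
  assumes "norm \<omega> \<le> 1"
  shows "\<bar>\<Sum>b\<in>Basis. (\<omega> \<bullet> b) * f b\<bar> \<le> (\<Sum>b\<in>Basis. \<bar>f b\<bar>)"
proof (rule order_trans[OF sum_abs sum_mono])
  fix b :: 'a assume "b \<in> Basis"
  then have "\<bar>\<omega> \<bullet> b\<bar> \<le> 1"
    using Basis_le_norm[of b \<omega>] assms by linarith
  then show "\<bar>(\<omega> \<bullet> b) * f b\<bar> \<le> \<bar>f b\<bar>"
    by (simp add: abs_mult mult_left_le_one_le)
qed

lemma partials_vanish_outside_support:
  fixes D :: "'a::euclidean_space list \<Rightarrow> 'a \<Rightarrow> real"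
  assumes dD: "\<And>ds x. (D ds has_derivative (\<lambda>h. \<Sum>b\<in>Basis. (h \<bullet> b) * D (b # ds) x)) (at x)"
    and z: "z \<notin> closure {x. D [] x \<noteq> 0}"
  shows "\<And>b. b \<in> Basis \<Longrightarrow> D [b] z = 0"
    and "\<And>b c. b \<in> Basis \<Longrightarrow> c \<in> Basis \<Longrightarrow> D [c, b] z = 0"
proof -
  let ?U = "- closure {x. D [] x \<noteq> 0}"
  have D1: "D [b] y = 0" if "y \<in> ?U" "b \<in> Basis" for y b
  proof (rule has_derivative_partials_eq_0[of ?U y "D []" "\<lambda>b. D [b] y"])
    show "D [] x = 0" if "x \<in> ?U" for x
      using that closure_subset[of "{x. D [] x \<noteq> 0}"] by blast
  qed (use that dD in auto)
  show "D [b] z = 0" if "b \<in> Basis" for b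
    using D1 z that by simp
  show "D [c, b] z = 0" if "b \<in> Basis" "c \<in> Basis" for b c
  proof (rule has_derivative_partials_eq_0[of ?U z "D [b]" "\<lambda>c. D [c, b] z"])
    show "D [b] x = 0" if "x \<in> ?U" for x
      using that D1 \<open>b \<in> Basis\<close> by auto
  qed (use that z dD in auto)
qed

lemma partials_bounded_on_rays:
  fixes D :: "'a::euclidean_space list \<Rightarrow> 'a \<Rightarrow> real"
  assumes cD: "\<And>ds. continuous_on UNIV (D ds)"
  obtains C where "\<And>\<omega> s. norm \<omega> = 1 \<Longrightarrow> \<bar>s\<bar> \<le> R \<Longrightarrow>
      \<bar>\<Sum>b\<in>Basis. (\<omega> \<bullet> b) * D [b] (s *\<^sub>R \<omega>)\<bar> \<le> C
      \<and> \<bar>\<Sum>b\<in>Basis. (\<omega> \<bullet> b) * (\<Sum>c\<in>Basis. (\<omega> \<bullet> c) * D [c, b] (s *\<^sub>R \<omega>))\<bar> \<le> C"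
proof -
  let ?G = "\<lambda>x. (\<Sum>b\<in>Basis. \<bar>D [b] x\<bar>) + (\<Sum>b\<in>Basis. \<Sum>c\<in>Basis. \<bar>D [c, b] x\<bar>)"
  have "continuous_on (cball 0 R) ?G"
    by (intro continuous_intros continuous_on_subset[OF cD]) auto
  then have "bounded (?G ` cball 0 R)"
    by (intro compact_imp_bounded compact_continuous_image compact_cball)
  then obtain C where "\<forall>y\<in>?G ` cball 0 R. norm y \<le> C"
    unfolding bounded_iff by blast
  then have C: "\<And>x. x \<in> cball 0 R \<Longrightarrow> \<bar>?G x\<bar> \<le> C"
    by simp
  show thesis
  proof (rule that)
    fix \<omega> :: 'a and s :: real
    assume \<omega>: "norm \<omega> = 1" and s: "\<bar>s\<bar> \<le> R"
    have "\<bar>\<Sum>b\<in>Basis. (\<omega> \<bullet> b) * D [b] (s *\<^sub>R \<omega>)\<bar> \<le> (\<Sum>b\<in>Basis. \<bar>D [b] (s *\<^sub>R \<omega>)\<bar>)"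
      using \<omega> by (intro abs_sum_Basis_inner_le) simp
    moreover have "\<bar>\<Sum>b\<in>Basis. (\<omega> \<bullet> b) * (\<Sum>c\<in>Basis. (\<omega> \<bullet> c) * D [c, b] (s *\<^sub>R \<omega>))\<bar>
        \<le> (\<Sum>b\<in>Basis. \<Sum>c\<in>Basis. \<bar>D [c, b] (s *\<^sub>R \<omega>)\<bar>)"
      using \<omega> by (intro order_trans[OF abs_sum_Basis_inner_le] sum_mono abs_sum_Basis_inner_le) auto
    moreover have "0 \<le> (\<Sum>b\<in>Basis. \<bar>D [b] (s *\<^sub>R \<omega>)\<bar>)" "0 \<le> (\<Sum>b\<in>Basis. \<Sum>c\<in>Basis. \<bar>D [c, b] (s *\<^sub>R \<omega>)\<bar>)"
      by (auto intro: sum_nonneg)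
    moreover have "\<bar>?G (s *\<^sub>R \<omega>)\<bar> \<le> C"
      using \<omega> s by (intro C) simp
    ultimately show "\<bar>\<Sum>b\<in>Basis. (\<omega> \<bullet> b) * D [b] (s *\<^sub>R \<omega>)\<bar> \<le> C
        \<and> \<bar>\<Sum>b\<in>Basis. (\<omega> \<bullet> b) * (\<Sum>c\<in>Basis. (\<omega> \<bullet> c) * D [c, b] (s *\<^sub>R \<omega>))\<bar> \<le> C"
      by linarith
  qed
qed

lemma smooth_fun_radial_derivs:
  fixes u :: "'a::euclidean_space \<Rightarrow> real"
  assumes "smooth_fun u" "compact_support u"
  obtains R :: real and w w' :: "'a \<Rightarrow> real \<Rightarrow> real" and C :: real where "0 < R"
    "\<And>\<omega> s. (w \<omega> has_real_derivative w' \<omega> s) (at s)"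
    "\<And>\<omega>. continuous_on UNIV (w' \<omega>)"
    "\<And>x. radial_d u x = w (sgn x) (norm x)"
    "\<And>x. radial_dd u x = w' (sgn x) (norm x)"
    "radial_d u \<in> borel_measurable borel" "radial_dd u \<in> borel_measurable borel"
    "\<And>\<omega> s. norm \<omega> = 1 \<Longrightarrow> R \<le> s \<Longrightarrow> w \<omega> s = 0 \<and> w' \<omega> s = 0"
    "\<And>\<omega> s. norm \<omega> = 1 \<Longrightarrow> 0 \<le> s \<Longrightarrow> s \<le> R \<Longrightarrow> \<bar>w \<omega> s\<bar> \<le> C \<and> \<bar>w' \<omega> s\<bar> \<le> C"
proof -
  obtain D :: "'a list \<Rightarrow> 'a \<Rightarrow> real" where D0: "D [] = u"
    and dD: "\<And>ds x. (D ds has_derivative (\<lambda>h. \<Sum>b\<in>Basis. (h \<bullet> b) * D (b # ds) x)) (at x)"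
    and cD: "\<And>ds. continuous_on UNIV (D ds)"
    using assms(1) unfolding smooth_fun_def by blast
  obtain R where R: "0 < R" "closure {x. u x \<noteq> 0} \<subseteq> ball 0 R"
    using assms(2) unfolding compact_support_def by (metis compact_imp_bounded bounded_subset_ballD)
  define w where "w = (\<lambda>\<omega> s. \<Sum>b\<in>Basis. (\<omega> \<bullet> b) * D [b] (s *\<^sub>R \<omega>))"
  define w' where "w' = (\<lambda>\<omega> s. \<Sum>b\<in>Basis. (\<omega> \<bullet> b) * (\<Sum>c\<in>Basis. (\<omega> \<bullet> c) * D [c, b] (s *\<^sub>R \<omega>)))"
  have du: "((\<lambda>t. u (t *\<^sub>R \<omega>)) has_real_derivative w \<omega> s) (at s)" for \<omega> s
    unfolding w_def D0[symmetric] by (rule has_real_derivative_along_ray[OF dD])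
  have dw: "(w \<omega> has_real_derivative w' \<omega> s) (at s)" for \<omega> s
    unfolding w_def w'_def by (intro DERIV_sum DERIV_cmult has_real_derivative_along_ray[OF dD])
  have d: "radial_d u x = w (sgn x) (norm x)" for x
    unfolding radial_d_def by (rule DERIV_imp_deriv[OF du])
  have dd: "radial_dd u x = w' (sgn x) (norm x)" for x
  proof -
    have "deriv (\<lambda>t. u (t *\<^sub>R sgn x)) = w (sgn x)"
      using DERIV_imp_deriv[OF du] by blast
    then show ?thesis
      unfolding radial_dd_def using DERIV_imp_deriv[OF dw] by simp
  qed
  have [measurable]: "D ds \<in> borel_measurable borel" for ds
    using cD by (rule borel_measurable_continuous_onI)
  have polar: "norm x *\<^sub>R sgn x = x" for x :: 'a
    by (cases "x = 0") (simp_all add: sgn_div_norm)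
  have "radial_d u = (\<lambda>x. \<Sum>b\<in>Basis. (sgn x \<bullet> b) * D [b] x)"
    "radial_dd u = (\<lambda>x. \<Sum>b\<in>Basis. (sgn x \<bullet> b) * (\<Sum>c\<in>Basis. (sgn x \<bullet> c) * D [c, b] x))"
    by (simp_all add: fun_eq_iff d dd w_def w'_def polar)
  then have md: "radial_d u \<in> borel_measurable borel" "radial_dd u \<in> borel_measurable borel"
    by simp_all measurable
  have cw': "continuous_on UNIV (w' \<omega>)" for \<omega>
    unfolding w'_def by (intro continuous_intros continuous_on_compose2[OF cD]) auto
  have supp: "w \<omega> s = 0 \<and> w' \<omega> s = 0" if "norm \<omega> = 1" "R \<le> s" for \<omega> s
  proof -
    have "s *\<^sub>R \<omega> \<notin> closure {x. D [] x \<noteq> 0}"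
      using that R D0 by auto
    from partials_vanish_outside_support[OF dD this] show ?thesis
      unfolding w_def w'_def by simp
  qed
  obtain C where C: "\<And>\<omega> s. norm \<omega> = 1 \<Longrightarrow> \<bar>s\<bar> \<le> R \<Longrightarrow> \<bar>w \<omega> s\<bar> \<le> C \<and> \<bar>w' \<omega> s\<bar> \<le> C"
    unfolding w_def w'_def by (fact partials_bounded_on_rays[OF cD])
  have "\<bar>w \<omega> s\<bar> \<le> C \<and> \<bar>w' \<omega> s\<bar> \<le> C" if "norm \<omega> = 1" "0 \<le> s" "s \<le> R" for \<omega> s
    using that by (intro C) auto
  from that[OF R(1) dw cw' d dd md supp this] show thesis .
qed

lemma borel_measurable_radial_derivs:
  assumes "smooth_fun u" "compact_support u"
  shows "radial_d u \<in> borel_measurable borel" and "radial_dd u \<in> borel_measurable borel"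
  by (rule smooth_fun_radial_derivs[OF assms]; assumption)+

section \<open>The Rellich inequality\<close>

lemma measurable_model_vol [simp]: "measurable (model_vol \<psi>) N = measurable borel N"
  by (rule measurable_cong_sets) (simp_all add: model_vol_def)

lemma ray_integral_model_density:
  fixes \<psi> :: "real \<Rightarrow> real" and f :: "'a::euclidean_space \<Rightarrow> real"
  assumes "norm \<omega> = 1" and \<psi>: "\<And>r. 0 < r \<Longrightarrow> 0 \<le> \<psi> r"
  shows "ray_integral (\<lambda>x. ennreal ((\<psi> (norm x) / norm x) ^ (DIM('a) - 1)) * ennreal (f x)) \<omega>
       = (\<integral>\<^sup>+r\<in>{0<..}. ennreal (\<psi> r ^ (DIM('a) - 1) * f (r *\<^sub>R \<omega>)) \<partial>lborel)"
  unfolding ray_integral_def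
proof (rule nn_integral_cong)
  fix r :: real
  have "ennreal ((\<psi> r / r) ^ (DIM('a) - 1)) * ennreal (f (r *\<^sub>R \<omega>)) * ennreal (r ^ (DIM('a) - 1))
      = ennreal (\<psi> r ^ (DIM('a) - 1) * f (r *\<^sub>R \<omega>))" if "0 < r"
    using that \<psi>[OF that] by (simp add: power_divide ennreal_mult'[symmetric] ennreal_mult''[symmetric])
  then show "ennreal ((\<psi> (norm (r *\<^sub>R \<omega>)) / norm (r *\<^sub>R \<omega>)) ^ (DIM('a) - 1)) * ennreal (f (r *\<^sub>R \<omega>))
        * ennreal (r ^ (DIM('a) - 1)) * indicator {0<..} r
      = ennreal (\<psi> r ^ (DIM('a) - 1) * f (r *\<^sub>R \<omega>)) * indicator {0<..} r"
    using assms by (auto split: split_indicator)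
qed

lemma integral_mono_of_nn_integral_le:
  fixes f g :: "'a \<Rightarrow> real"
  assumes [measurable]: "f \<in> borel_measurable M" "g \<in> borel_measurable M"
    and "\<And>x. 0 \<le> f x" "\<And>x. 0 \<le> g x"
    and le: "(\<integral>\<^sup>+x. ennreal (g x) \<partial>M) \<le> (\<integral>\<^sup>+x. ennreal (f x) \<partial>M)"
    and fin: "(\<integral>\<^sup>+x. ennreal (f x) \<partial>M) < \<infinity>"
  shows "integrable M g" and "integral\<^sup>L M g \<le> integral\<^sup>L M f"
proof -
  show "integrable M g"
    using assms le_less_trans[OF le fin] by (intro integrableI_nonneg) auto
  show "integral\<^sup>L M g \<le> integral\<^sup>L M f"
    using assms by (simp add: integral_eq_nn_integral enn2real_mono)
qed

lemma integrable_nonneg_summands: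
  fixes f g :: "'a \<Rightarrow> real"
  assumes "integrable M (\<lambda>x. f x + g x)" "f \<in> borel_measurable M" "g \<in> borel_measurable M"
    and "\<And>x. 0 \<le> f x" "\<And>x. 0 \<le> g x"
  shows "integrable M f" and "integrable M g"
    and "(\<integral>x. f x + g x \<partial>M) = integral\<^sup>L M f + integral\<^sup>L M g"
proof -
  show f: "integrable M f" and g: "integrable M g"
    using assms by (auto intro!: Bochner_Integration.integrable_bound[OF assms(1)])
  show "(\<integral>x. f x + g x \<partial>M) = integral\<^sup>L M f + integral\<^sup>L M g"
    by (rule Bochner_Integration.integral_add[OF f g])
qed

context model_warping
begin

lemma borel_measurable_p_norm [measurable]: "(\<lambda>x::'a::euclidean_space. p (norm x)) \<in> borel_measurable borel"
  by (intro borel_measurable_continuous_onI continuous_on_compose2[OF continuous_on_p] continuous_intros) auto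

lemma borel_measurable_p'_norm [measurable]: "(\<lambda>x::'a::euclidean_space. p' (norm x)) \<in> borel_measurable borel"
  by (intro borel_measurable_continuous_onI continuous_on_compose2[OF continuous_on_p'] continuous_intros) auto

lemma nn_integral_model_vol:
  fixes f :: "'a::euclidean_space \<Rightarrow> real"
  assumes "f \<in> borel_measurable borel"
  shows "(\<integral>\<^sup>+x. ennreal (f x) \<partial>model_vol p)
       = (\<integral>\<^sup>+x. ennreal ((p (norm x) / norm x) ^ (DIM('a) - 1)) * ennreal (f x) \<partial>lborel)"
  unfolding model_vol_def by (rule nn_integral_density) (use assms in \<open>simp_all, measurable\<close>)

lemma ray_integral_model_vol:
  fixes f :: "'a::euclidean_space \<Rightarrow> real"
  assumes "norm \<omega> = 1"
  shows "ray_integral (\<lambda>x. ennreal ((p (norm x) / norm x) ^ (DIM('a) - 1)) * ennreal (f x)) \<omega>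
       = (\<integral>\<^sup>+r\<in>{0<..}. ennreal (p r ^ (DIM('a) - 1) * f (r *\<^sub>R \<omega>)) \<partial>lborel)"
  using assms p_pos by (intro ray_integral_model_density) (auto intro: less_imp_le)

lemma nn_integral_model_vol_mono_rays:
  fixes f g :: "'a::euclidean_space \<Rightarrow> real"
  assumes [measurable]: "f \<in> borel_measurable borel" "g \<in> borel_measurable borel"
    and rays: "\<And>\<omega>. norm \<omega> = 1 \<Longrightarrow> (\<integral>\<^sup>+r\<in>{0<..}. ennreal (p r ^ (DIM('a) - 1) * g (r *\<^sub>R \<omega>)) \<partial>lborel)
      \<le> (\<integral>\<^sup>+r\<in>{0<..}. ennreal (p r ^ (DIM('a) - 1) * f (r *\<^sub>R \<omega>)) \<partial>lborel)"
  shows "(\<integral>\<^sup>+x. ennreal (g x) \<partial>model_vol p) \<le> (\<integral>\<^sup>+x. ennreal (f x) \<partial>model_vol p)"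
  unfolding nn_integral_model_vol[OF assms(1)] nn_integral_model_vol[OF assms(2)]
proof (rule nn_integral_mono_rays)
  fix \<omega> :: 'a
  assume "norm \<omega> = 1"
  then show "ray_integral (\<lambda>x. ennreal ((p (norm x) / norm x) ^ (DIM('a) - 1)) * ennreal (g x)) \<omega>
      \<le> ray_integral (\<lambda>x. ennreal ((p (norm x) / norm x) ^ (DIM('a) - 1)) * ennreal (f x)) \<omega>"
    unfolding ray_integral_model_vol[OF \<open>norm \<omega> = 1\<close>] by (rule rays)
qed measurable

lemma nn_integral_model_vol_finite_rays:
  fixes f :: "'a::euclidean_space \<Rightarrow> real"
  assumes [measurable]: "f \<in> borel_measurable borel"
    and rays: "\<And>\<omega>. norm \<omega> = 1 \<Longrightarrow> (\<integral>\<^sup>+r\<in>{0<..}. ennreal (p r ^ (DIM('a) - 1) * f (r *\<^sub>R \<omega>)) \<partial>lborel) \<le> ennreal K"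
  shows "(\<integral>\<^sup>+x. ennreal (f x) \<partial>model_vol p) < \<infinity>"
  unfolding nn_integral_model_vol[OF assms(1)]
proof (rule nn_integral_finite_rays)
  fix \<omega> :: 'a
  assume "norm \<omega> = 1"
  then show "ray_integral (\<lambda>x. ennreal ((p (norm x) / norm x) ^ (DIM('a) - 1)) * ennreal (f x)) \<omega> \<le> ennreal K"
    unfolding ray_integral_model_vol[OF \<open>norm \<omega> = 1\<close>] by (rule rays)
qed measurable

lemma rellich_nn_integrals:
  fixes u :: "'a::euclidean_space \<Rightarrow> real"
  assumes N: "3 \<le> DIM('a)" and u: "smooth_fun u" "compact_support u"
  shows "(\<integral>\<^sup>+x. ennreal ((radial_d u x)\<^sup>2 * rellich_weight DIM('a) p (norm x)) \<partial>model_vol p)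
       \<le> (\<integral>\<^sup>+x. ennreal ((radial_laplacian p p' u x)\<^sup>2) \<partial>model_vol p)"
    and "(\<integral>\<^sup>+x. ennreal ((radial_laplacian p p' u x)\<^sup>2) \<partial>model_vol p) < \<infinity>"
proof -
  define n where "n = DIM('a) - 1"
  have n: "2 \<le> n"
    using N by (simp add: n_def)
  obtain R C w w' where R: "0 < R" and dw: "\<And>\<omega> s. (w \<omega> has_real_derivative w' \<omega> s) (at s)"
    and cw': "\<And>\<omega>. continuous_on UNIV (w' \<omega>)"
    and d: "\<And>x. radial_d u x = w (sgn x) (norm x)" and dd: "\<And>x. radial_dd u x = w' (sgn x) (norm x)"
    and [measurable]: "radial_d u \<in> borel_measurable borel" "radial_dd u \<in> borel_measurable borel"
    and supp: "\<And>\<omega> s. norm \<omega> = 1 \<Longrightarrow> R \<le> s \<Longrightarrow> w \<omega> s = 0 \<and> w' \<omega> s = 0"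
    and C: "\<And>\<omega> s. norm \<omega> = 1 \<Longrightarrow> 0 \<le> s \<Longrightarrow> s \<le> R \<Longrightarrow> \<bar>w \<omega> s\<bar> \<le> C \<and> \<bar>w' \<omega> s\<bar> \<le> C"
    by (fact smooth_fun_radial_derivs[OF u])
  obtain M where M: "\<And>r. 0 \<le> r \<Longrightarrow> r \<le> R \<Longrightarrow> p' r \<le> M"
    by (fact p'_bounded)
  have on_ray: "norm (r *\<^sub>R \<omega>) = r" "sgn (r *\<^sub>R \<omega>) = \<omega>" if "norm \<omega> = 1" "0 < r" for r and \<omega> :: 'a
    using that by (auto simp: sgn_scaleR sgn_div_norm)
  have ray_P: "(\<integral>\<^sup>+r\<in>{0<..}. ennreal (p r ^ n * (radial_laplacian p p' u (r *\<^sub>R \<omega>))\<^sup>2) \<partial>lborel)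
      = (\<integral>\<^sup>+r\<in>{0<..}. ennreal (laplacian_density n (w \<omega>) (w' \<omega>) r) \<partial>lborel)" if "norm \<omega> = 1" for \<omega>
    by (intro nn_integral_cong)
      (auto simp: that on_ray[OF that] d dd radial_laplacian_def laplacian_density_def n_def
        split: split_indicator)
  have ray_Q: "(\<integral>\<^sup>+r\<in>{0<..}. ennreal (p r ^ n
        * ((radial_d u (r *\<^sub>R \<omega>))\<^sup>2 * rellich_weight DIM('a) p (norm (r *\<^sub>R \<omega>)))) \<partial>lborel)
      = (\<integral>\<^sup>+r\<in>{0<..}. ennreal (rellich_density n (w \<omega>) r) \<partial>lborel)" if "norm \<omega> = 1" for \<omega>
    using N by (intro nn_integral_cong)
      (auto simp: that on_ray[OF that] d rellich_density_def n_def mult_ac split: split_indicator)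
  have mP: "(\<lambda>x. (radial_laplacian p p' u x)\<^sup>2) \<in> borel_measurable borel"
    unfolding radial_laplacian_def by measurable
  have mQ: "(\<lambda>x. (radial_d u x)\<^sup>2 * rellich_weight DIM('a) p (norm x)) \<in> borel_measurable borel"
    unfolding rellich_weight_def by measurable
  show "(\<integral>\<^sup>+x. ennreal ((radial_d u x)\<^sup>2 * rellich_weight DIM('a) p (norm x)) \<partial>model_vol p)
      \<le> (\<integral>\<^sup>+x. ennreal ((radial_laplacian p p' u x)\<^sup>2) \<partial>model_vol p)"
  proof (rule nn_integral_model_vol_mono_rays[OF mP mQ])
    fix \<omega> :: 'a
    assume \<omega>: "norm \<omega> = 1"
    show "(\<integral>\<^sup>+r\<in>{0<..}. ennreal (p r ^ (DIM('a) - 1)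
          * ((radial_d u (r *\<^sub>R \<omega>))\<^sup>2 * rellich_weight DIM('a) p (norm (r *\<^sub>R \<omega>)))) \<partial>lborel)
        \<le> (\<integral>\<^sup>+r\<in>{0<..}. ennreal (p r ^ (DIM('a) - 1) * (radial_laplacian p p' u (r *\<^sub>R \<omega>))\<^sup>2) \<partial>lborel)"
      unfolding n_def[symmetric] ray_P[OF \<omega>] ray_Q[OF \<omega>]
      by (rule rellich_ray_inequality[where w="w \<omega>" and w'="w' \<omega>", OF n R dw cw' supp[OF \<omega>]])
  qed
  \<comment> \<open>Without finiteness the Bochner integrals of the theorem would silently be 0.\<close>
  show "(\<integral>\<^sup>+x. ennreal ((radial_laplacian p p' u x)\<^sup>2) \<partial>model_vol p) < \<infinity>"
  proof (rule nn_integral_model_vol_finite_rays[OF mP])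
    fix \<omega> :: 'a
    assume \<omega>: "norm \<omega> = 1"
    show "(\<integral>\<^sup>+r\<in>{0<..}. ennreal (p r ^ (DIM('a) - 1) * (radial_laplacian p p' u (r *\<^sub>R \<omega>))\<^sup>2) \<partial>lborel)
        \<le> ennreal (R * (M ^ n * R ^ (n - 2) * (C * R + real n * M * C)\<^sup>2))"
      unfolding n_def[symmetric] ray_P[OF \<omega>]
      by (rule laplacian_ray_energy_bound[OF n R supp[OF \<omega>] C[OF \<omega>] M])
  qed
qed


lemma rellich_inequality:
  fixes u :: "'a::euclidean_space \<Rightarrow> real"
  assumes N: "3 \<le> DIM('a)" and u: "smooth_fun u" "compact_support u"
  shows "(\<integral>x. (radial_laplacian p p' u x)\<^sup>2 \<partial>model_vol p)
           - ((real DIM('a) - 1) / 2)\<^sup>2 * (\<integral>x. (radial_d u x)\<^sup>2 \<partial>model_vol p)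
         \<ge> 1/4 * (\<integral>x. (1 / (norm x)\<^sup>2) * (radial_d u x)\<^sup>2 \<partial>model_vol p)
           + ((real DIM('a))\<^sup>2 - 1) / 4 * (\<integral>x. (1 / (p (norm x))\<^sup>2) * (radial_d u x)\<^sup>2 \<partial>model_vol p)"
proof -
  let ?M = "model_vol p :: 'a measure" and ?N = "real DIM('a)"
  let ?A = "\<lambda>x. ((?N - 1) / 2)\<^sup>2 * (radial_d u x)\<^sup>2"
    and ?B = "\<lambda>x. 1/4 * ((1 / (norm x)\<^sup>2) * (radial_d u x)\<^sup>2)"
    and ?C = "\<lambda>x. (?N\<^sup>2 - 1) / 4 * ((1 / (p (norm x))\<^sup>2) * (radial_d u x)\<^sup>2)"
  note [measurable] = borel_measurable_radial_derivs[OF u]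
  have N1: "1 \<le> ?N"
    using N by simp
  have weight: "(radial_d u x)\<^sup>2 * rellich_weight DIM('a) p (norm x) = ?A x + (?B x + ?C x)" for x
    by (simp add: rellich_weight_def algebra_simps)
  have "(\<lambda>x. (radial_laplacian p p' u x)\<^sup>2) \<in> borel_measurable ?M"
    "(\<lambda>x. (radial_d u x)\<^sup>2 * rellich_weight DIM('a) p (norm x)) \<in> borel_measurable ?M"
    unfolding measurable_model_vol radial_laplacian_def rellich_weight_def by measurable
  moreover have "0 \<le> (radial_d u x)\<^sup>2 * rellich_weight DIM('a) p (norm x)" for x
    using rellich_weight_nonneg[OF N1] by simp
  ultimately have int: "integrable ?M (\<lambda>x. ?A x + (?B x + ?C x))"
    and le: "(\<integral>x. ?A x + (?B x + ?C x) \<partial>?M) \<le> (\<integral>x. (radial_laplacian p p' u x)\<^sup>2 \<partial>?M)"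
    using integral_mono_of_nn_integral_le[OF _ _ zero_le_power2 _ rellich_nn_integrals[OF N u]]
    unfolding weight by blast+
  have meas: "?A \<in> borel_measurable ?M" "?B \<in> borel_measurable ?M" "?C \<in> borel_measurable ?M"
    unfolding measurable_model_vol by measurable
  have nonneg: "0 \<le> ?A x" "0 \<le> ?B x" "0 \<le> ?C x" for x
    using N1 by simp_all
  note A_BC = integrable_nonneg_summands[OF int meas(1) borel_measurable_add[OF meas(2,3)] nonneg(1)
      add_nonneg_nonneg[OF nonneg(2,3)]]
  note B_C = integrable_nonneg_summands[OF A_BC(2) meas(2,3) nonneg(2,3)]
  have "(\<integral>x. ?A x + (?B x + ?C x) \<partial>?M) = ((?N - 1) / 2)\<^sup>2 * (\<integral>x. (radial_d u x)\<^sup>2 \<partial>?M)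
        + (1/4 * (\<integral>x. (1 / (norm x)\<^sup>2) * (radial_d u x)\<^sup>2 \<partial>?M)
        + (?N\<^sup>2 - 1) / 4 * (\<integral>x. (1 / (p (norm x))\<^sup>2) * (radial_d u x)\<^sup>2 \<partial>?M))"
    unfolding A_BC(3) B_C(3) by (simp only: integral_mult_right_zero)
  with le show ?thesis
    by linarith
qed

end

theorem corollary2p6:
  fixes \<psi> :: "real \<Rightarrow> real" and \<Psi> :: "nat \<Rightarrow> real \<Rightarrow> real"
    and u :: "real ^ 'n \<Rightarrow> real"
  assumes N3: "CARD('n) \<ge> 3"
    and smooth_psi: "smooth_halfline_derivs \<Psi>" and psi_def: "\<Psi> 0 = \<psi>"
    and nonneg: "\<forall>r\<ge>0. \<psi> r \<ge> 0" and pos: "\<forall>r>0. \<psi> r > 0"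
    and d1: "\<Psi> 1 0 = 1" and even: "\<forall>k. \<Psi> (2 * k) 0 = 0"
    and curv1: "\<forall>r>0. K_rad \<psi> (\<Psi> 2) r \<le> -1"
    and curv2: "\<forall>r>0. K_rad \<psi> (\<Psi> 2) r \<ge> H_tan \<psi> (\<Psi> 1) r"
    and u_smooth: "smooth_fun u" and u_supp: "compact_support u"
  shows "(\<integral>x. (radial_laplacian \<psi> (\<Psi> 1) u x)\<^sup>2 \<partial>model_vol \<psi>)
           - ((real CARD('n) - 1) / 2)\<^sup>2 * (\<integral>x. (radial_d u x)\<^sup>2 \<partial>model_vol \<psi>)
         \<ge> 1/4 * (\<integral>x. (1 / (norm x)\<^sup>2) * (radial_d u x)\<^sup>2 \<partial>model_vol \<psi>)
           + ((real CARD('n))\<^sup>2 - 1) / 4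
             * (\<integral>x. (1 / (\<psi> (norm x))\<^sup>2) * (radial_d u x)\<^sup>2 \<partial>model_vol \<psi>)"
proof -
  have derivs: "(\<Psi> k has_real_derivative \<Psi> (Suc k) r) (at r within {0..})" if "0 \<le> r" for k r
    using smooth_psi that unfolding smooth_halfline_derivs_def by blast
  interpret model_warping \<psi> "\<Psi> 1" "\<Psi> 2"
  proof
    show "(\<psi> has_real_derivative \<Psi> 1 r) (at r within {0..})" if "0 \<le> r" for r
      using derivs[OF that, of 0] psi_def by simp
    show "(\<Psi> 1 has_real_derivative \<Psi> 2 r) (at r within {0..})" if "0 \<le> r" for r
      using derivs[OF that, of 1] by (simp add: numeral_2_eq_2)
    show "\<psi> 0 = 0"
      using even psi_def by (metis mult_0_right)
  qed (use d1 pos curv1 curv2 in auto)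
  show ?thesis
    using rellich_inequality[OF _ u_smooth u_supp] N3 by simp
qed

end
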